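(* Let $E$ be an IL FS encoder with $s$ states whose Kraft matrix is irreducible, and let $L_{\max}=\max_{z,x}L[f(z,x)]$. Let $x^n\in\mathcal{X}^n$ and $z_1\in\mathcal{Z}$, define $z_{i+1}=g(z_i,x_i)$ for $i=1,\dots,n$, and assume $x^n$ is cyclic with respect to $g$, i.e., $z_{n+1}=z_1$. Extend both sequences periodically, $x_{i+n}=x_i$, $z_{i+n}=z_i$. For $1\le\ell\le n$, let $\hat P$ be the empirical distribution on $\mathcal{Z}\times\mathcal{X}^\ell$ given by $$\hat P(z,w^\ell)=\frac1n\big|\{1\le i\le n:\ z_i=z,\ (x_i,x_{i+1},\dots,x_{i+\ell-1})=w^\ell\}\big|,$$ and let $\hat H(X_\ell\mid X^{\ell-1})$ be the conditional entropy (in bits) of the last coordinate given the first $\ell-1$ coordinates under the $\mathcal{X}^\ell$-marginal of $\hat P$. Then $$\frac1n\sum_{i=1}^n L[f(z_i,x_i)]\ \ge\ \hat H(X_\ell\mid X^{\ell-1})-\frac{2\log_2 s+(s-1)L_{\max}}{\ell}.$$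
   Context: A finite-state (FS) encoder is a quintuple $E=(\mathcal{X},\mathcal{Y},\mathcal{Z},f,g)$, where $\mathcal{X}$ is a finite source alphabet of size $\alpha$, $\mathcal{Y}$ is a finite set of binary strings (possibly containing the empty string, of length $0$), $\mathcal{Z}$ is a finite set of $s$ states, $f:\mathcal{Z}\times\mathcal{X}\to\mathcal{Y}$ is the output function and $g:\mathcal{Z}\times\mathcal{X}\to\mathcal{Z}$ is the next-state function. For $z\in\mathcal{Z}$ and $x^n=(x_1,\dots,x_n)\in\mathcal{X}^n$, set $z_1=z$, $z_{i+1}=g(z_i,x_i)$; write $g(z,x^n)=z_{n+1}$ and let $f(z,x^n)$ denote the binary string obtained by concatenating $f(z_1,x_1),\dots,f(z_n,x_n)$; its length is $L[f(z,x^n)]=\sum_{i=1}^n L[f(z_i,x_i)]$, where $L(\cdot)$ denotes the length of a binary string. The encoder is information lossless (IL) if for every $z\in\mathcal{Z}$ and every $n\ge1$, the map $x^n\mapsto (f(z,x^n),g(z,x^n))$ is injective on $\mathcal{X}^n$. The Kraft matrix of $E$ is the $s\times s$ nonnegative matrix $K$ with entries $K_{zz'}=\sum_{\{x\in\mathcal{X}:\ g(z,x)=z'\}}2^{-L[f(z,x)]}$ (an empty sum is $0$). *)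

theory Defs
  imports Complex_Main
begin

fun fs_next :: "('z \<Rightarrow> 'x \<Rightarrow> 'z) \<Rightarrow> 'z \<Rightarrow> 'x list \<Rightarrow> 'z" where
  "fs_next g z [] = z"
| "fs_next g z (a # w) = fs_next g (g z a) w"

fun fs_out :: "('z \<Rightarrow> 'x \<Rightarrow> bool list) \<Rightarrow> ('z \<Rightarrow> 'x \<Rightarrow> 'z) \<Rightarrow> 'z \<Rightarrow> 'x list \<Rightarrow> bool list" where
  "fs_out f g z [] = []"
| "fs_out f g z (a # w) = f z a @ fs_out f g (g z a) w"

definition info_lossless :: "('z \<Rightarrow> 'x \<Rightarrow> bool list) \<Rightarrow> ('z \<Rightarrow> 'x \<Rightarrow> 'z) \<Rightarrow> bool" where
  "info_lossless f g \<longleftrightarrow>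
     (\<forall>z. \<forall>n\<ge>1. inj_on (\<lambda>w. (fs_out f g z w, fs_next g z w)) {w. length w = n})"

definition kraft_matrix :: "('z \<Rightarrow> 'x \<Rightarrow> bool list) \<Rightarrow> ('z \<Rightarrow> 'x \<Rightarrow> 'z) \<Rightarrow> 'z \<Rightarrow> 'z \<Rightarrow> real" where
  "kraft_matrix f g z z' = (\<Sum>x\<in>{x. g z x = z'}. 2 powr (- real (length (f z x))))"

fun mat_pow :: "('z::finite \<Rightarrow> 'z \<Rightarrow> real) \<Rightarrow> nat \<Rightarrow> 'z \<Rightarrow> 'z \<Rightarrow> real" where
  "mat_pow K 0 = (\<lambda>i j. if i = j then 1 else 0)"
| "mat_pow K (Suc m) = (\<lambda>i j. \<Sum>k\<in>UNIV. mat_pow K m i k * K k j)"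

definition irreducible_mat :: "('z::finite \<Rightarrow> 'z \<Rightarrow> real) \<Rightarrow> bool" where
  "irreducible_mat K \<longleftrightarrow> (\<forall>i j. \<exists>k. mat_pow K k i j > 0)"

definition L_max :: "('z::finite \<Rightarrow> 'x::finite \<Rightarrow> bool list) \<Rightarrow> nat" where
  "L_max f = Max {length (f z x) | z x. True}"

text \<open>Input x^n given as a list xs (0-indexed: x_{i+1} = xs ! i), periodically extended;
  state sequence z_{i+1} (0-indexed state i) starting at z1.\<close>
definition state_seq :: "('z \<Rightarrow> 'x \<Rightarrow> 'z) \<Rightarrow> 'z \<Rightarrow> 'x list \<Rightarrow> nat \<Rightarrow> 'z" where
  "state_seq g z1 xs i = fs_next g z1 (take (i mod length xs) xs)"

definition window :: "'x list \<Rightarrow> nat \<Rightarrow> nat \<Rightarrow> 'x list" where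
  "window xs l i = map (\<lambda>j. xs ! ((i + j) mod length xs)) [0..<l]"

definition emp_joint :: "('z \<Rightarrow> 'x \<Rightarrow> 'z) \<Rightarrow> 'z \<Rightarrow> 'x list \<Rightarrow> nat \<Rightarrow> 'z \<Rightarrow> 'x list \<Rightarrow> real" where
  "emp_joint g z1 xs l z w =
     real (card {i. i < length xs \<and> state_seq g z1 xs i = z \<and> window xs l i = w}) / real (length xs)"

definition emp_marg :: "('z::finite \<Rightarrow> 'x \<Rightarrow> 'z) \<Rightarrow> 'z \<Rightarrow> 'x list \<Rightarrow> nat \<Rightarrow> 'x list \<Rightarrow> real" where
  "emp_marg g z1 xs l w = (\<Sum>z\<in>UNIV. emp_joint g z1 xs l z w)"

text \<open>Conditional entropy (bits) of the last coordinate given the first l-1 coordinates,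
  for a distribution P on X^l; 0 log 0 = 0.\<close>
definition cond_entropy_last :: "('x::finite list \<Rightarrow> real) \<Rightarrow> nat \<Rightarrow> real" where
  "cond_entropy_last P l =
     - (\<Sum>w\<in>{w. length w = l \<and> P w > 0}.
          P w * log 2 (P w / (\<Sum>a\<in>UNIV. P (butlast w @ [a]))))"

end

theory Submission
  imports Defs "HOL-Analysis.Convex"
begin

(* Information losslessness makes the Kraft sum over the paths of length m between two states
   grow at most linearly in m; since these sums are supermultiplicative, the sums over cycles are
   at most 1, and irreducibility (a return path of length below s) then bounds every path sum by
   2^((s-1) Lmax).  So from any state the weights 2^-L of the codewords of all l-blocks add up to at
   most s 2^((s-1) Lmax), and Gibbs' inequality for the empirical joint distribution of
   (state, l-block) against these weights gives  H(X^l) <= l * rate + 2 log s + (s-1) Lmax.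
   Finally the empirical block entropies of a cyclic sequence are concave in the block length
   (Gibbs again, against the Markov extension P(a v) P(v b) / P(v)), so the last increment
   H(X_l | X^(l-1)) is at most H(X^l) / l. *)

lemma fs_next_append: "fs_next g z (u @ v) = fs_next g (fs_next g z u) v"
  by (induction u arbitrary: z) auto

lemma fs_out_append: "fs_out f g z (u @ v) = fs_out f g z u @ fs_out f g (fs_next g z u) v"
  by (induction u arbitrary: z) auto

lemma length_le_L_max: "length (f z x) \<le> L_max f"
proof -
  have "{length (f z x) | z x. True} = range (\<lambda>(z, x). length (f z x))" by auto
  then show ?thesis unfolding L_max_def by (intro Max_ge) auto
qed

lemma length_fs_out_le: "length (fs_out f g z w) \<le> length w * L_max f"
  by (induction w arbitrary: z) (auto intro: add_mono length_le_L_max)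

lemma finite_lists_length [simp]: "finite {w :: 'a::finite list. length w = m}"
  using finite_lists_length_eq[of "UNIV :: 'a set" m] by simp

lemma sum_powr_bool_lists_length_eq:
  "(\<Sum>b | length b = k. 2 powr - real (length (b :: bool list))) = 1"
proof -
  have "card {b :: bool list. length b = k} = 2 ^ k"
    using card_lists_length_eq[of "UNIV :: bool set" k] by simp
  then show ?thesis by (simp add: powr_minus powr_realpow)
qed

lemma sum_powr_bool_lists_length_le:
  "(\<Sum>b | length b \<le> N. 2 powr - real (length (b :: bool list))) = real N + 1"
proof (induction N)
  case 0
  have "{b :: bool list. length b \<le> 0} = {[]}" by auto
  then show ?case by simp
next
  case (Suc N)
  have split: "{b :: bool list. length b \<le> Suc N} = {b. length b \<le> N} \<union> {b. length b = Suc N}"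
    by auto
  have "(\<Sum>b | length b \<le> Suc N. 2 powr - real (length (b :: bool list)))
      = (\<Sum>b | length b \<le> N. 2 powr - real (length (b :: bool list)))
        + (\<Sum>b | length b = Suc N. 2 powr - real (length (b :: bool list)))"
    unfolding split
    by (rule sum.union_disjoint) (use finite_lists_length_le[of "UNIV :: bool set" N] in auto)
  with Suc.IH sum_powr_bool_lists_length_eq[of "Suc N"] show ?case by simp
qed

text \<open>The \<open>(z, z')\<close> entry of the \<open>m\<close>-th power of the Kraft matrix, expanded into a sum over paths.\<close>
definition path_kraft_sum ::
    "('z \<Rightarrow> 'x \<Rightarrow> bool list) \<Rightarrow> ('z \<Rightarrow> 'x \<Rightarrow> 'z) \<Rightarrow> 'z \<Rightarrow> nat \<Rightarrow> 'z \<Rightarrow> real" where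
  "path_kraft_sum f g z m z' =
     (\<Sum>w | length w = m \<and> fs_next g z w = z'. 2 powr - real (length (fs_out f g z w)))"

lemma path_kraft_sum_nonneg: "0 \<le> path_kraft_sum f g z m z'"
  unfolding path_kraft_sum_def by (intro sum_nonneg) auto

lemma path_kraft_sum_le_linear:
  fixes f :: "'z::finite \<Rightarrow> 'x::finite \<Rightarrow> bool list"
  assumes IL: "info_lossless f g"
  shows "path_kraft_sum f g z m z' \<le> real (m * L_max f) + 1"
proof -
  let ?S = "{w. length w = m \<and> fs_next g z w = z'}"
  \<comment> \<open>By losslessness, the codewords of these paths are distinct strings of length at most \<open>m * L_max f\<close>.\<close>
  have inj: "inj_on (fs_out f g z) ?S"
  proof (cases "m = 0")
    case False
    then have "inj_on (\<lambda>w. (fs_out f g z w, fs_next g z w)) {w. length w = m}"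
      using IL unfolding info_lossless_def by auto
    then show ?thesis unfolding inj_on_def by auto
  qed (auto intro: inj_onI)
  have "path_kraft_sum f g z m z' = (\<Sum>b\<in>fs_out f g z ` ?S. 2 powr - real (length b))"
    unfolding path_kraft_sum_def by (simp add: sum.reindex[OF inj])
  also have "\<dots> \<le> (\<Sum>b | length b \<le> m * L_max f. 2 powr - real (length (b :: bool list)))"
    using finite_lists_length_le[of "UNIV :: bool set" "m * L_max f"] length_fs_out_le[of f g z]
    by (intro sum_mono2) auto
  also have "\<dots> = real (m * L_max f) + 1"
    by (rule sum_powr_bool_lists_length_le)
  finally show ?thesis .
qed

lemma path_kraft_sum_supermult:
  fixes f :: "'z \<Rightarrow> 'x::finite \<Rightarrow> bool list"
  shows "path_kraft_sum f g z a z' * path_kraft_sum f g z' b z'' \<le> path_kraft_sum f g z (a + b) z''"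
proof -
  let ?S1 = "{u. length u = a \<and> fs_next g z u = z'}"
  let ?S2 = "{v. length v = b \<and> fs_next g z' v = z''}"
  let ?h = "\<lambda>w. 2 powr - real (length (fs_out f g z w))"
  have inj: "inj_on (\<lambda>(u, v). u @ v) (?S1 \<times> ?S2)"
    unfolding inj_on_def by auto
  have "path_kraft_sum f g z a z' * path_kraft_sum f g z' b z''
      = (\<Sum>u\<in>?S1. \<Sum>v\<in>?S2. 2 powr - real (length (fs_out f g z u)) * 2 powr - real (length (fs_out f g z' v)))"
    unfolding path_kraft_sum_def by (rule sum_product)
  also have "\<dots> = (\<Sum>(u, v)\<in>?S1 \<times> ?S2. ?h (u @ v))"
    unfolding sum.cartesian_product
    by (intro sum.cong refl) (auto simp: fs_out_append powr_add[symmetric] add.commute)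
  also have "\<dots> = (\<Sum>w\<in>(\<lambda>(u, v). u @ v) ` (?S1 \<times> ?S2). ?h w)"
    by (rule sum.reindex_cong[OF inj refl, symmetric]) auto
  also have "\<dots> \<le> (\<Sum>w | length w = a + b \<and> fs_next g z w = z''. ?h w)"
    by (intro sum_mono2) (auto simp: fs_next_append)
  finally show ?thesis unfolding path_kraft_sum_def .
qed

lemma ex_power_gt_linear:
  fixes t c :: real
  assumes "1 < t" "0 \<le> c"
  shows "\<exists>m. real m * c + 1 < t ^ m"
proof -
  define d where "d = t - 1"
  have d: "0 < d" using assms(1) by (simp add: d_def)
  define k where "k = nat \<lceil>2 * c / d\<^sup>2\<rceil> + 1"
  have "2 * c / d\<^sup>2 \<le> real k"
    unfolding k_def using real_nat_ceiling_ge[of "2 * c / d\<^sup>2"] by simp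
  then have k: "0 < real k" "2 * c \<le> real k * d\<^sup>2"
    using d by (auto simp: k_def pos_divide_le_eq)
  \<comment> \<open>Squaring Bernoulli's inequality gives a quadratic lower bound for \<open>t ^ (2 * k)\<close>.\<close>
  have "1 + real k * d \<le> t ^ k"
    using Bernoulli_inequality[of d k] d by (simp add: d_def)
  then have "(1 + real k * d)\<^sup>2 \<le> t ^ (2 * k)"
    using d by (simp add: power_mult[of t k 2, unfolded mult.commute[of k]] power_mono)
  moreover have "real (2 * k) * c + 1 < (1 + real k * d)\<^sup>2"
  proof -
    have "real k * (2 * c) \<le> real k * (real k * d\<^sup>2)"
      using k by (intro mult_left_mono) auto
    moreover have "0 < real k * d" using k d by simp
    ultimately show ?thesis by (simp add: power2_eq_square algebra_simps)
  qed
  ultimately show ?thesis by (intro exI[of _ "2 * k"]) simp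
qed

lemma path_kraft_sum_cycle_le_1:
  fixes f :: "'z::finite \<Rightarrow> 'x::finite \<Rightarrow> bool list"
  assumes IL: "info_lossless f g"
  shows "path_kraft_sum f g z N z \<le> 1"
proof (rule ccontr)
  \<comment> \<open>Otherwise the powers of the cycle sum, bounded by sums over longer cycles, outgrow the linear bound.\<close>
  let ?t = "path_kraft_sum f g z N z"
  assume "\<not> ?t \<le> 1"
  then have t: "1 < ?t" by simp
  have pow: "?t ^ m \<le> path_kraft_sum f g z (m * N) z" for m
  proof (induction m)
    case 0
    have "{w. length w = 0 \<and> fs_next g z w = z} = {[]}" by auto
    then show ?case by (simp add: path_kraft_sum_def)
  next
    case (Suc m)
    have "?t ^ Suc m \<le> ?t * path_kraft_sum f g z (m * N) z"
      using Suc t by simp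
    also have "\<dots> \<le> path_kraft_sum f g z (Suc m * N) z"
      using path_kraft_sum_supermult[of f g z N z "m * N" z] by simp
    finally show ?case .
  qed
  obtain m where "real m * real (N * L_max f) + 1 < ?t ^ m"
    using ex_power_gt_linear[OF t, of "real (N * L_max f)"] by auto
  with pow[of m] path_kraft_sum_le_linear[OF IL, of z "m * N" z] show False
    by (simp add: mult.assoc)
qed

lemma kraft_matrix_nonneg: "0 \<le> kraft_matrix f g z z'"
  unfolding kraft_matrix_def by (intro sum_nonneg) auto

lemma mat_pow_nonneg:
  assumes "\<And>i j. 0 \<le> K i j"
  shows "0 \<le> mat_pow K k i j"
  using assms by (induction k arbitrary: j) (auto intro!: sum_nonneg)

lemma mat_pow_kraft_matrix_pos_imp_path:
  fixes g :: "'z::finite \<Rightarrow> 'x \<Rightarrow> 'z"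
  assumes "0 < mat_pow (kraft_matrix f g) k i j"
  shows "\<exists>w. length w = k \<and> fs_next g i w = j"
  using assms
proof (induction k arbitrary: j)
  case 0
  then have "i = j" by (simp split: if_splits)
  then show ?case by (intro exI[of _ "[]"]) simp
next
  case (Suc k)
  let ?K = "kraft_matrix f g"
  have "0 < (\<Sum>q\<in>UNIV. mat_pow ?K k i q * ?K q j)"
    using Suc.prems by simp
  then obtain q where "0 < mat_pow ?K k i q * ?K q j"
    by (meson not_le sum_nonpos)
  then have "0 < mat_pow ?K k i q" and "0 < ?K q j"
    using mat_pow_nonneg[of ?K k i q] kraft_matrix_nonneg[of f g]
    by (auto simp: zero_less_mult_iff)
  obtain w where "length w = k" "fs_next g i w = q"
    using Suc.IH[OF \<open>0 < mat_pow ?K k i q\<close>] by blast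
  moreover obtain x where "g q x = j"
    using \<open>0 < ?K q j\<close> unfolding kraft_matrix_def by fastforce
  ultimately show ?case
    by (intro exI[of _ "w @ [x]"]) (simp add: fs_next_append)
qed

text \<open>Pigeonhole: a path visiting some state twice can be shortened by cutting out the loop.\<close>
lemma fs_next_short_path:
  fixes g :: "'z::finite \<Rightarrow> 'x \<Rightarrow> 'z"
  shows "fs_next g i w = j \<Longrightarrow> \<exists>w'. length w' < card (UNIV :: 'z set) \<and> fs_next g i w' = j"
proof (induction "length w" arbitrary: w rule: less_induct)
  case less
  show ?case
  proof (cases "length w < card (UNIV :: 'z set)")
    case True
    with less.prems show ?thesis by blast
  next
    case False
    let ?h = "\<lambda>k. fs_next g i (take k w)"
    have "\<not> inj_on ?h {0..length w}"
      using False card_mono[of UNIV "?h ` {0..length w}"] by (intro pigeonhole) simp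
    then obtain a b where "a \<le> length w" "b \<le> length w" "a \<noteq> b" "?h a = ?h b"
      unfolding inj_on_def by auto
    then obtain a b where ab: "a < b" "b \<le> length w" "?h a = ?h b"
      by (metis linorder_neqE_nat)
    define w' where "w' = take a w @ drop b w"
    have "fs_next g i w' = fs_next g (?h b) (drop b w)"
      using ab(3) by (simp add: w'_def fs_next_append)
    also have "\<dots> = j"
      using less.prems by (metis append_take_drop_id fs_next_append)
    finally show ?thesis
      using less.hyps[of w'] ab by (simp add: w'_def)
  qed
qed

lemma irreducible_imp_short_path:
  fixes f :: "'z::finite \<Rightarrow> 'x \<Rightarrow> bool list"
  assumes "irreducible_mat (kraft_matrix f g)"
  shows "\<exists>w. length w < card (UNIV :: 'z set) \<and> fs_next g i w = j"
proof -
  obtain k where "0 < mat_pow (kraft_matrix f g) k i j"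
    using assms unfolding irreducible_mat_def by blast
  then obtain w where "fs_next g i w = j"
    using mat_pow_kraft_matrix_pos_imp_path by blast
  then show ?thesis by (rule fs_next_short_path)
qed

lemma path_kraft_sum_ge_path:
  fixes f :: "'z::finite \<Rightarrow> 'x::finite \<Rightarrow> bool list"
  assumes "length w = k" "fs_next g z w = z'"
  shows "2 powr - real (k * L_max f) \<le> path_kraft_sum f g z k z'"
proof -
  have "2 powr - real (k * L_max f) \<le> 2 powr - real (length (fs_out f g z w))"
    using length_fs_out_le[of f g z w] assms(1) by (simp flip: of_nat_mult)
  also have "\<dots> \<le> path_kraft_sum f g z k z'"
    unfolding path_kraft_sum_def using assms by (intro member_le_sum) auto
  finally show ?thesis .
qed

text \<open>A return path of length below \<open>s\<close> from \<open>z'\<close> to \<open>z\<close> closes every path from \<open>z\<close> to \<open>z'\<close>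
  into a cycle, whose Kraft sum is at most 1.\<close>
lemma path_kraft_sum_le_const:
  fixes f :: "'z::finite \<Rightarrow> 'x::finite \<Rightarrow> bool list"
  assumes IL: "info_lossless f g" and irr: "irreducible_mat (kraft_matrix f g)"
  shows "path_kraft_sum f g z m z' \<le> 2 powr ((real (card (UNIV :: 'z set)) - 1) * real (L_max f))"
proof -
  obtain w where w: "length w < card (UNIV :: 'z set)" "fs_next g z' w = z"
    using irreducible_imp_short_path[OF irr] by blast
  let ?k = "length w"
  have "path_kraft_sum f g z m z' * 2 powr - real (?k * L_max f)
      \<le> path_kraft_sum f g z m z' * path_kraft_sum f g z' ?k z"
    using path_kraft_sum_ge_path[OF refl w(2)] path_kraft_sum_nonneg
    by (intro mult_left_mono)
  also have "\<dots> \<le> path_kraft_sum f g z (m + ?k) z"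
    by (rule path_kraft_sum_supermult)
  also have "\<dots> \<le> 1"
    by (rule path_kraft_sum_cycle_le_1[OF IL])
  finally have "path_kraft_sum f g z m z' \<le> 2 powr real (?k * L_max f)"
    by (simp add: powr_minus field_simps)
  also have "\<dots> \<le> 2 powr ((real (card (UNIV :: 'z set)) - 1) * real (L_max f))"
    using w(1) by (intro powr_mono) (auto intro: mult_right_mono)
  finally show ?thesis .
qed

lemma sum_kraft_words_le:
  fixes f :: "'z::finite \<Rightarrow> 'x::finite \<Rightarrow> bool list"
  assumes IL: "info_lossless f g" and irr: "irreducible_mat (kraft_matrix f g)"
  shows "(\<Sum>w | length w = m. 2 powr - real (length (fs_out f g z w)))
    \<le> real (card (UNIV :: 'z set)) * 2 powr ((real (card (UNIV :: 'z set)) - 1) * real (L_max f))"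
proof -
  have "(\<Sum>w | length w = m. 2 powr - real (length (fs_out f g z w)))
      = (\<Sum>z'\<in>UNIV. path_kraft_sum f g z m z')"
    unfolding path_kraft_sum_def
    by (subst sum.group[symmetric, of _ UNIV "fs_next g z"]) simp_all
  also have "\<dots> \<le> (\<Sum>z'\<in>(UNIV :: 'z set). 2 powr ((real (card (UNIV :: 'z set)) - 1) * real (L_max f)))"
    by (intro sum_mono path_kraft_sum_le_const[OF IL irr])
  finally show ?thesis by simp
qed

definition emp_freq :: "(nat \<Rightarrow> 'a) \<Rightarrow> nat \<Rightarrow> 'a \<Rightarrow> real" where
  "emp_freq \<phi> n u = real (card {i. i < n \<and> \<phi> i = u}) / real n"

lemma emp_freq_nonneg: "0 \<le> emp_freq \<phi> n u"
  by (simp add: emp_freq_def)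

lemma emp_freq_pos_iff: "0 < emp_freq \<phi> n u \<longleftrightarrow> u \<in> \<phi> ` {..<n}"
proof -
  have "0 < emp_freq \<phi> n u \<longleftrightarrow> {i. i < n \<and> \<phi> i = u} \<noteq> {}"
    by (auto simp: emp_freq_def card_gt_0_iff zero_less_divide_iff)
  then show ?thesis by auto
qed

lemma emp_freq_pos: "i < n \<Longrightarrow> 0 < emp_freq \<phi> n (\<phi> i)"
  by (simp add: emp_freq_pos_iff)

lemma sum_lessThan_emp_freq:
  "(\<Sum>i<n. F (\<phi> i)) = real n * (\<Sum>u\<in>\<phi> ` {..<n}. emp_freq \<phi> n u * F u)"
proof -
  have "(\<Sum>i<n. F (\<phi> i)) = (\<Sum>u\<in>\<phi> ` {..<n}. \<Sum>i | i \<in> {..<n} \<and> \<phi> i = u. F (\<phi> i))"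
    by (rule sum.image_gen) simp
  also have "\<dots> = (\<Sum>u\<in>\<phi> ` {..<n}. real (card {i. i < n \<and> \<phi> i = u}) * F u)"
    by (intro sum.cong) auto
  also have "\<dots> = real n * (\<Sum>u\<in>\<phi> ` {..<n}. emp_freq \<phi> n u * F u)"
    by (cases "n = 0") (simp_all add: emp_freq_def sum_distrib_left)
  finally show ?thesis .
qed

lemma sum_emp_freq:
  assumes "0 < n" "finite U" "\<phi> ` {..<n} \<subseteq> U"
  shows "(\<Sum>u\<in>U. emp_freq \<phi> n u) = 1"
proof -
  have "(\<Sum>u\<in>U. emp_freq \<phi> n u) = (\<Sum>u\<in>U. \<Sum>i | i \<in> {..<n} \<and> \<phi> i = u. 1 / real n)"
    by (simp add: emp_freq_def)
  also have "\<dots> = (\<Sum>i<n. 1 / real n)"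
    using assms by (intro sum.group) auto
  finally show ?thesis using assms(1) by simp
qed

lemma emp_freq_le_comp: "emp_freq \<phi> n u \<le> emp_freq (\<lambda>i. h (\<phi> i)) n (h u)"
  unfolding emp_freq_def by (intro divide_right_mono) (auto intro: card_mono)

lemma sum_emp_freq_pair:
  fixes c :: "nat \<Rightarrow> 'b::finite"
  shows "(\<Sum>b\<in>UNIV. emp_freq (\<lambda>i. (\<phi> i, c i)) n (u, b)) = emp_freq \<phi> n u"
proof -
  have "(\<Sum>b\<in>UNIV. real (card {i. i < n \<and> \<phi> i = u \<and> c i = b})) = real (card {i. i < n \<and> \<phi> i = u})"
    using sum.group[of "{i. i < n \<and> \<phi> i = u}" UNIV c "\<lambda>_. 1 :: real"] by simp
  then show ?thesis by (simp add: emp_freq_def flip: sum_divide_distrib)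
qed

lemma sum_lessThan_shift_periodic:
  fixes h :: "nat \<Rightarrow> 'a::cancel_comm_monoid_add"
  assumes "\<And>i. h (i + n) = h i"
  shows "(\<Sum>i<n. h (i + j)) = (\<Sum>i<n. h i)"
proof (induction j)
  case (Suc j)
  have "(\<Sum>i<Suc n. h (i + j)) = h j + (\<Sum>i<n. h (i + Suc j))"
    using sum.lessThan_Suc_shift[of "\<lambda>i. h (i + j)" n] by simp
  moreover have "(\<Sum>i<Suc n. h (i + j)) = (\<Sum>i<n. h (i + j)) + h j"
    using assms[of j] by (simp add: add.commute)
  ultimately show ?case using Suc.IH by (simp add: add.commute)
qed simp

lemma emp_freq_shift:
  assumes "\<And>i. \<phi> (i + n) = \<phi> i"
  shows "emp_freq (\<lambda>i. \<phi> (Suc i)) n = emp_freq \<phi> n"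
proof
  fix u
  have "(\<Sum>i<n. of_bool (\<phi> (i + 1) = u) :: real) = (\<Sum>i<n. of_bool (\<phi> i = u))"
    using assms by (intro sum_lessThan_shift_periodic) simp
  then show "emp_freq (\<lambda>i. \<phi> (Suc i)) n u = emp_freq \<phi> n u"
    by (simp add: emp_freq_def lessThan_def Collect_conj_eq)
qed

lemma gibbs_inequality:
  fixes c \<rho> :: "'a \<Rightarrow> real"
  assumes "finite S" "S \<noteq> {}" "(\<Sum>u\<in>S. c u) = 1"
    and "\<And>u. u \<in> S \<Longrightarrow> 0 < c u" "\<And>u. u \<in> S \<Longrightarrow> 0 < \<rho> u"
  shows "(\<Sum>u\<in>S. c u * log 2 (\<rho> u / c u)) \<le> log 2 (\<Sum>u\<in>S. \<rho> u)"
proof -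
  have "0 \<le> c u" if "u \<in> S" for u
    using assms(4)[OF that] by simp
  then have "(\<Sum>u\<in>S. c u * log 2 (\<rho> u / c u)) \<le> log 2 (\<Sum>u\<in>S. c u *\<^sub>R (\<rho> u / c u))"
    using assms by (intro concave_on_sum[OF assms(1,2) log_concave]) auto
  also have "(\<Sum>u\<in>S. c u *\<^sub>R (\<rho> u / c u)) = (\<Sum>u\<in>S. \<rho> u)"
    using assms(4) by (intro sum.cong) (auto simp: less_imp_neq[symmetric])
  finally show ?thesis .
qed

lemma gibbs_inequality_emp_freq:
  assumes n: "0 < n" and U: "finite U" "\<phi> ` {..<n} \<subseteq> U"
    and \<rho>_nonneg: "\<And>u. u \<in> U \<Longrightarrow> 0 \<le> \<rho> u" and \<rho>_pos: "\<And>i. i < n \<Longrightarrow> 0 < \<rho> (\<phi> i)"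
    and C: "(\<Sum>u\<in>U. \<rho> u) \<le> C"
  shows "(\<Sum>i<n. log 2 (\<rho> (\<phi> i) / emp_freq \<phi> n (\<phi> i))) \<le> real n * log 2 C"
proof -
  let ?I = "\<phi> ` {..<n}"
  have "(\<Sum>u\<in>?I. emp_freq \<phi> n u * log 2 (\<rho> u / emp_freq \<phi> n u)) \<le> log 2 (\<Sum>u\<in>?I. \<rho> u)"
    using n \<rho>_pos by (intro gibbs_inequality) (auto simp: sum_emp_freq emp_freq_pos)
  also have "\<dots> \<le> log 2 C"
  proof -
    have "0 < (\<Sum>u\<in>?I. \<rho> u)"
      using n \<rho>_pos by (intro sum_pos) auto
    moreover have "(\<Sum>u\<in>?I. \<rho> u) \<le> C"
      using sum_mono2[OF U(1,2), of \<rho>] \<rho>_nonneg C by force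
    ultimately show ?thesis by simp
  qed
  finally show ?thesis
    unfolding sum_lessThan_emp_freq[of "\<lambda>u. log 2 (\<rho> u / emp_freq \<phi> n u)"]
    by (intro mult_left_mono) auto
qed

lemma length_window [simp]: "length (window xs k i) = k"
  by (simp add: window_def)

lemma window_mod: "window xs k (i mod length xs) = window xs k i"
  by (simp add: window_def mod_add_left_eq)

lemma window_periodic: "window xs k (i + length xs) = window xs k i"
  by (metis window_mod mod_add_self2)

lemma window_Suc_snoc: "window xs (Suc k) i = window xs k i @ [xs ! ((i + k) mod length xs)]"
  by (simp add: window_def)

lemma window_Suc_Cons: "window xs (Suc k) i = xs ! (i mod length xs) # window xs k (Suc i)"
  by (simp add: window_def upt_conv_Cons map_Suc_upt[symmetric] del: upt_Suc)

lemma butlast_window: "butlast (window xs (Suc k) i) = window xs k i"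
  by (simp add: window_Suc_snoc)

lemma tl_window: "tl (window xs (Suc k) i) = window xs k (Suc i)"
  by (simp add: window_Suc_Cons)

abbreviation block_freq :: "'x list \<Rightarrow> nat \<Rightarrow> 'x list \<Rightarrow> real" where
  "block_freq xs k \<equiv> emp_freq (window xs k) (length xs)"

lemma block_freq_window_pos: "xs \<noteq> [] \<Longrightarrow> 0 < block_freq xs k (window xs k i)"
  using emp_freq_pos[of "i mod length xs" "length xs" "window xs k"] by (simp add: window_mod)

lemma sum_block_freq_snoc:
  fixes xs :: "'x::finite list"
  shows "(\<Sum>b\<in>UNIV. block_freq xs (Suc k) (v @ [b])) = block_freq xs k v"
proof -
  have "block_freq xs (Suc k) (v @ [b])
      = emp_freq (\<lambda>i. (window xs k i, xs ! ((i + k) mod length xs))) (length xs) (v, b)" for b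
    by (simp add: emp_freq_def window_Suc_snoc)
  then show ?thesis by (simp add: sum_emp_freq_pair)
qed

lemma sum_block_freq_Cons:
  fixes xs :: "'x::finite list"
  shows "(\<Sum>a\<in>UNIV. block_freq xs (Suc k) (a # v)) = block_freq xs k v"
proof -
  have "block_freq xs (Suc k) (a # v)
      = emp_freq (\<lambda>i. (window xs k (Suc i), xs ! (i mod length xs))) (length xs) (v, a)" for a
    by (simp add: emp_freq_def window_Suc_Cons conj_commute)
  then have "(\<Sum>a\<in>UNIV. block_freq xs (Suc k) (a # v)) = emp_freq (\<lambda>i. window xs k (Suc i)) (length xs) v"
    by (simp add: sum_emp_freq_pair)
  also have "\<dots> = block_freq xs k v"
    by (simp add: emp_freq_shift window_periodic)
  finally show ?thesis .
qed

lemma sum_lists_length_Suc_Cons: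
  fixes F :: "'a::finite list \<Rightarrow> 'b::comm_monoid_add"
  shows "(\<Sum>u | length u = Suc m. F u) = (\<Sum>a\<in>UNIV. \<Sum>v | length v = m. F (a # v))"
proof -
  have "{u :: 'a list. length u = Suc m} = (\<lambda>(a, v). a # v) ` (UNIV \<times> {v. length v = m})"
    by (auto simp: length_Suc_conv image_iff)
  moreover have "inj_on (\<lambda>(a, v). a # v) (UNIV \<times> {v :: 'a list. length v = m})"
    unfolding inj_on_def by auto
  ultimately show ?thesis
    by (simp add: sum.reindex sum.cartesian_product case_prod_unfold)
qed

lemma sum_lists_length_Suc_snoc:
  fixes F :: "'a::finite list \<Rightarrow> 'b::comm_monoid_add"
  shows "(\<Sum>u | length u = Suc m. F u) = (\<Sum>v | length v = m. \<Sum>b\<in>UNIV. F (v @ [b]))"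
proof -
  have "(\<Sum>u | length u = Suc m. F u) = (\<Sum>u | length u = Suc m. F (rev u))"
    by (rule sum.reindex_bij_witness[of _ rev rev]) auto
  also have "\<dots> = (\<Sum>b\<in>UNIV. \<Sum>v | length v = m. F (rev v @ [b]))"
    by (simp add: sum_lists_length_Suc_Cons)
  also have "\<dots> = (\<Sum>b\<in>UNIV. \<Sum>v | length v = m. F (v @ [b]))"
    by (intro sum.cong refl sum.reindex_bij_witness[of _ rev rev]) auto
  finally show ?thesis by (rule trans) (rule sum.swap)
qed

lemma sum_block_freq_markov_extension:
  fixes xs :: "'x::finite list"
  assumes "xs \<noteq> []"
  shows "(\<Sum>u | length u = Suc (Suc m).
     block_freq xs (Suc m) (butlast u) * block_freq xs (Suc m) (tl u) / block_freq xs m (tl (butlast u))) = 1"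
proof -
  let ?p = "block_freq xs"
  have "(\<Sum>u | length u = Suc (Suc m). ?p (Suc m) (butlast u) * ?p (Suc m) (tl u) / ?p m (tl (butlast u)))
      = (\<Sum>a\<in>UNIV. \<Sum>v | length v = m. \<Sum>b\<in>UNIV. ?p (Suc m) (a # v) * ?p (Suc m) (v @ [b]) / ?p m v)"
    by (simp only: sum_lists_length_Suc_Cons[of _ "Suc m"] sum_lists_length_Suc_snoc[of _ m])
      (simp add: butlast_append)
  also have "\<dots> = (\<Sum>v | length v = m. (\<Sum>a\<in>UNIV. ?p (Suc m) (a # v)) * (\<Sum>b\<in>UNIV. ?p (Suc m) (v @ [b])) / ?p m v)"
    by (subst sum.swap) (simp add: sum_product sum_divide_distrib)
  also have "\<dots> = (\<Sum>v | length v = m. ?p m v)"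
    by (intro sum.cong refl) (simp add: sum_block_freq_Cons sum_block_freq_snoc)
  also have "\<dots> = 1"
    using assms by (intro sum_emp_freq) auto
  finally show ?thesis .
qed

definition block_entropy :: "'x list \<Rightarrow> nat \<Rightarrow> real" where
  "block_entropy xs k = - (\<Sum>i<length xs. log 2 (block_freq xs k (window xs k i))) / real (length xs)"

lemma block_entropy_0: "block_entropy xs 0 = 0"
  by (cases "xs = []") (simp_all add: block_entropy_def emp_freq_def window_def)

lemma sum_log_block_freq:
  assumes "xs \<noteq> []"
  shows "(\<Sum>i<length xs. log 2 (block_freq xs k (window xs k i))) = - real (length xs) * block_entropy xs k"
  using assms by (simp add: block_entropy_def)

lemma sum_log_block_freq_Suc:
  assumes "xs \<noteq> []"
  shows "(\<Sum>i<length xs. log 2 (block_freq xs k (window xs k (Suc i)))) = - real (length xs) * block_entropy xs k"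
  using sum_lessThan_shift_periodic[of "\<lambda>i. log 2 (block_freq xs k (window xs k i))" "length xs" 1]
    sum_log_block_freq[OF assms]
  by (simp add: window_periodic)

lemma cond_entropy_last_block_freq:
  fixes xs :: "'x::finite list"
  assumes "xs \<noteq> []"
  shows "cond_entropy_last (block_freq xs (Suc m)) (Suc m) = block_entropy xs (Suc m) - block_entropy xs m"
proof -
  let ?n = "length xs" and ?p = "block_freq xs" and ?w = "window xs"
  let ?F = "\<lambda>w. log 2 (?p (Suc m) w / (\<Sum>a\<in>UNIV. ?p (Suc m) (butlast w @ [a])))"
  have support: "{w. length w = Suc m \<and> 0 < ?p (Suc m) w} = ?w (Suc m) ` {..<?n}"
    by (auto simp: emp_freq_pos_iff)
  have pointwise: "?F (?w (Suc m) i) = log 2 (?p (Suc m) (?w (Suc m) i)) - log 2 (?p m (?w m i))" for i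
    using block_freq_window_pos[OF assms, of "Suc m" i] block_freq_window_pos[OF assms, of m i]
    by (simp add: butlast_window sum_block_freq_snoc log_divide)
  have "(\<Sum>i<?n. ?F (?w (Suc m) i)) = real ?n * (block_entropy xs m - block_entropy xs (Suc m))"
    using assms by (simp only: pointwise) (simp add: sum_subtractf sum_log_block_freq algebra_simps)
  then show ?thesis
    using assms unfolding cond_entropy_last_def support
    by (simp add: sum_lessThan_emp_freq[of ?F] mult.assoc)
qed

lemma block_entropy_concave:
  fixes xs :: "'x::finite list"
  assumes "xs \<noteq> []"
  shows "block_entropy xs m + block_entropy xs (Suc (Suc m)) \<le> 2 * block_entropy xs (Suc m)"
proof -
  let ?n = "length xs" and ?p = "block_freq xs" and ?w = "window xs"
  define \<rho> where "\<rho> u = ?p (Suc m) (butlast u) * ?p (Suc m) (tl u) / ?p m (tl (butlast u))" for u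
  have \<rho>_window: "\<rho> (?w (Suc (Suc m)) i)
      = ?p (Suc m) (?w (Suc m) i) * ?p (Suc m) (?w (Suc m) (Suc i)) / ?p m (?w m (Suc i))" for i
    unfolding \<rho>_def by (simp add: butlast_window tl_window)
  have "(\<Sum>i<?n. log 2 (\<rho> (?w (Suc (Suc m)) i) / ?p (Suc (Suc m)) (?w (Suc (Suc m)) i))) \<le> real ?n * log 2 1"
  proof (rule gibbs_inequality_emp_freq)
    show "(\<Sum>u | length u = Suc (Suc m). \<rho> u) \<le> 1"
      unfolding \<rho>_def using sum_block_freq_markov_extension[OF assms] by simp
  qed (use assms block_freq_window_pos[OF assms] in \<open>auto simp: \<rho>_def butlast_window tl_window emp_freq_nonneg\<close>)
  moreover have "log 2 (\<rho> (?w (Suc (Suc m)) i) / ?p (Suc (Suc m)) (?w (Suc (Suc m)) i))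
      = log 2 (?p (Suc m) (?w (Suc m) i)) + log 2 (?p (Suc m) (?w (Suc m) (Suc i)))
        - log 2 (?p m (?w m (Suc i))) - log 2 (?p (Suc (Suc m)) (?w (Suc (Suc m)) i))" for i
    using block_freq_window_pos[OF assms, of "Suc m" i] block_freq_window_pos[OF assms, of "Suc m" "Suc i"]
      block_freq_window_pos[OF assms, of m "Suc i"] block_freq_window_pos[OF assms, of "Suc (Suc m)" i]
    by (simp add: \<rho>_window log_divide log_mult)
  ultimately have "real ?n * (block_entropy xs m + block_entropy xs (Suc (Suc m)) - 2 * block_entropy xs (Suc m)) \<le> 0"
    using assms
    by (simp add: sum_subtractf sum.distrib sum_log_block_freq sum_log_block_freq_Suc algebra_simps)
  then show ?thesis
    using assms by (simp add: mult_le_0_iff)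
qed

lemma block_entropy_increment_le:
  fixes xs :: "'x::finite list"
  assumes "xs \<noteq> []"
  shows "real (Suc m) * (block_entropy xs (Suc m) - block_entropy xs m) \<le> block_entropy xs (Suc m)"
proof -
  let ?\<Delta> = "\<lambda>j. block_entropy xs (Suc j) - block_entropy xs j"
  have "?\<Delta> (Suc j) \<le> ?\<Delta> j" for j
    using block_entropy_concave[OF assms, of j] by simp
  then have antimono: "?\<Delta> j' \<le> ?\<Delta> j" if "j \<le> j'" for j j'
    using lift_Suc_antimono_le[of ?\<Delta>] that by blast
  have "real (Suc m) * ?\<Delta> m = (\<Sum>j<Suc m. ?\<Delta> m)"
    by simp
  also have "\<dots> \<le> (\<Sum>j<Suc m. ?\<Delta> j)"
    by (intro sum_mono antimono) simp
  also have "\<dots> = block_entropy xs (Suc m)"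
    using sum_lessThan_telescope[of "block_entropy xs" "Suc m"] by (simp add: block_entropy_0)
  finally show ?thesis .
qed

lemma state_seq_periodic: "state_seq g z1 xs (i + length xs) = state_seq g z1 xs i"
  by (simp add: state_seq_def)

lemma state_seq_Suc:
  assumes "xs \<noteq> []" and cyc: "fs_next g z1 xs = z1"
  shows "state_seq g z1 xs (Suc i) = g (state_seq g z1 xs i) (xs ! (i mod length xs))"
proof -
  let ?n = "length xs" and ?r = "i mod length xs"
  have r: "?r < ?n" using assms(1) by simp
  have "g (state_seq g z1 xs i) (xs ! ?r) = fs_next g z1 (take (Suc ?r) xs)"
    using r by (simp add: state_seq_def take_Suc_conv_app_nth fs_next_append)
  moreover have "state_seq g z1 xs (Suc i) = fs_next g z1 (take (Suc ?r) xs)"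
  proof (cases "Suc ?r = ?n")
    case True
    then show ?thesis using cyc by (simp add: state_seq_def mod_Suc)
  next
    case False
    then show ?thesis by (simp add: state_seq_def mod_Suc)
  qed
  ultimately show ?thesis by simp
qed

lemma length_fs_out_window:
  assumes "xs \<noteq> []" and "fs_next g z1 xs = z1"
  shows "length (fs_out f g (state_seq g z1 xs i) (window xs k i))
    = (\<Sum>j<k. length (f (state_seq g z1 xs (i + j)) (xs ! ((i + j) mod length xs))))"
proof (induction k arbitrary: i)
  case (Suc k)
  then show ?case
    by (simp add: window_Suc_Cons state_seq_Suc[OF assms, symmetric] sum.lessThan_Suc_shift del: sum.lessThan_Suc)
qed (simp add: window_def)

lemma sum_length_fs_out_window:
  assumes "xs \<noteq> []" and "fs_next g z1 xs = z1"
  shows "(\<Sum>i<length xs. length (fs_out f g (state_seq g z1 xs i) (window xs k i)))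
    = k * (\<Sum>i<length xs. length (f (state_seq g z1 xs i) (xs ! i)))"
proof -
  let ?c = "\<lambda>i. length (f (state_seq g z1 xs i) (xs ! (i mod length xs)))"
  have "(\<Sum>i<length xs. length (fs_out f g (state_seq g z1 xs i) (window xs k i)))
      = (\<Sum>j<k. \<Sum>i<length xs. ?c (i + j))"
    by (simp add: length_fs_out_window[OF assms] sum.swap[of _ "{..<k}"])
  also have "\<dots> = (\<Sum>j<k. \<Sum>i<length xs. ?c i)"
    by (intro sum.cong refl sum_lessThan_shift_periodic) (simp add: state_seq_periodic)
  finally show ?thesis by simp
qed

text \<open>Gibbs' inequality for the joint empirical distribution of states and \<open>l\<close>-blocks against the
  weights \<open>2\<^sup>-\<^sup>L\<close> of the corresponding codewords, whose total is bounded by irreducibility.\<close>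
lemma block_entropy_le_code_rate:
  fixes f :: "'z::finite \<Rightarrow> 'x::finite \<Rightarrow> bool list"
  assumes IL: "info_lossless f g" and irr: "irreducible_mat (kraft_matrix f g)"
    and cyc: "fs_next g z1 xs = z1" and ne: "xs \<noteq> []"
  shows "block_entropy xs l - (2 * log 2 (real (card (UNIV :: 'z set)))
      + (real (card (UNIV :: 'z set)) - 1) * real (L_max f))
    \<le> real l * (\<Sum>i<length xs. real (length (f (state_seq g z1 xs i) (xs ! i)))) / real (length xs)"
proof -
  let ?n = "length xs" and ?s = "real (card (UNIV :: 'z set))" and ?st = "state_seq g z1 xs"
  let ?len = "\<lambda>i. real (length (fs_out f g (?st i) (window xs l i)))"
  define \<phi> where "\<phi> i = (?st i, window xs l i)" for i
  define \<rho> where "\<rho> = (\<lambda>(z, w). 2 powr - real (length (fs_out f g z w)))"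
  define C where "C = ?s * (?s * 2 powr ((?s - 1) * real (L_max f)))"
  have n: "0 < ?n" using ne by simp
  have "(\<Sum>i<?n. log 2 (\<rho> (\<phi> i) / emp_freq \<phi> ?n (\<phi> i))) \<le> real ?n * log 2 C"
  proof (rule gibbs_inequality_emp_freq[OF n, where U = "UNIV \<times> {w. length w = l}"])
    have "(\<Sum>u\<in>UNIV \<times> {w. length w = l}. \<rho> u)
        = (\<Sum>z\<in>UNIV. \<Sum>w | length w = l. 2 powr - real (length (fs_out f g z w)))"
      by (simp add: \<rho>_def sum.cartesian_product)
    also have "\<dots> \<le> C"
      using sum_mono[OF sum_kraft_words_le[OF IL irr]] by (simp add: C_def)
    finally show "(\<Sum>u\<in>UNIV \<times> {w. length w = l}. \<rho> u) \<le> C" .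
  qed (auto simp: \<phi>_def \<rho>_def)
  moreover have "- ?len i - log 2 (block_freq xs l (window xs l i))
      \<le> log 2 (\<rho> (\<phi> i) / emp_freq \<phi> ?n (\<phi> i))" if "i < ?n" for i
  proof -
    have "0 < emp_freq \<phi> ?n (\<phi> i)"
      using that by (rule emp_freq_pos)
    moreover have "emp_freq \<phi> ?n (\<phi> i) \<le> block_freq xs l (window xs l i)"
      using emp_freq_le_comp[of \<phi> ?n "\<phi> i" snd] by (simp add: \<phi>_def)
    ultimately show ?thesis
      by (simp add: \<phi>_def \<rho>_def log_divide)
  qed
  then have "(\<Sum>i<?n. - ?len i - log 2 (block_freq xs l (window xs l i)))
      \<le> (\<Sum>i<?n. log 2 (\<rho> (\<phi> i) / emp_freq \<phi> ?n (\<phi> i)))"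
    by (intro sum_mono) simp
  moreover have "log 2 C = 2 * log 2 ?s + (?s - 1) * real (L_max f)"
    by (simp add: C_def log_mult)
  moreover have "(\<Sum>i<?n. ?len i) = real l * (\<Sum>i<?n. real (length (f (?st i) (xs ! i))))"
    using sum_length_fs_out_window[OF ne cyc, of f l] by (simp flip: of_nat_sum)
  ultimately show ?thesis
    using n by (simp add: sum_subtractf sum_negf sum_log_block_freq[OF ne] field_simps)
qed

lemma emp_marg_eq_block_freq:
  fixes g :: "'z::finite \<Rightarrow> 'x \<Rightarrow> 'z"
  shows "emp_marg g z1 xs l = block_freq xs l"
proof
  fix w
  have "emp_joint g z1 xs l z w = emp_freq (\<lambda>i. (window xs l i, state_seq g z1 xs i)) (length xs) (w, z)" for z
    by (simp add: emp_joint_def emp_freq_def conj_commute)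
  then show "emp_marg g z1 xs l w = block_freq xs l w"
    by (simp add: emp_marg_def sum_emp_freq_pair)
qed

theorem mainTheorem7:
  fixes f :: "'z::finite \<Rightarrow> 'x::finite \<Rightarrow> bool list"
    and g :: "'z \<Rightarrow> 'x \<Rightarrow> 'z"
    and z1 :: 'z and xs :: "'x list" and l :: nat
  assumes IL: "info_lossless f g"
    and irr: "irreducible_mat (kraft_matrix f g)"
    and cyc: "fs_next g z1 xs = z1"
    and l1: "1 \<le> l" and ln: "l \<le> length xs"
  shows "(1 / real (length xs)) * (\<Sum>i<length xs. real (length (f (state_seq g z1 xs i) (xs ! i))))
         \<ge> cond_entropy_last (emp_marg g z1 xs l) l
           - (2 * log 2 (real (card (UNIV :: 'z set))) + (real (card (UNIV :: 'z set)) - 1) * real (L_max f)) / real l"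
proof -
  have ne: "xs \<noteq> []" using l1 ln by auto
  obtain m where l: "l = Suc m" using l1 by (cases l) auto
  let ?T = "\<Sum>i<length xs. real (length (f (state_seq g z1 xs i) (xs ! i)))"
  let ?K = "2 * log 2 (real (card (UNIV :: 'z set))) + (real (card (UNIV :: 'z set)) - 1) * real (L_max f)"
  have "cond_entropy_last (emp_marg g z1 xs l) l = block_entropy xs l - block_entropy xs m"
    unfolding emp_marg_eq_block_freq l by (rule cond_entropy_last_block_freq[OF ne])
  then have "real l * cond_entropy_last (emp_marg g z1 xs l) l \<le> block_entropy xs l"
    using block_entropy_increment_le[OF ne, of m] by (simp add: l)
  also have "\<dots> \<le> ?K + real l * ?T / real (length xs)"
    using block_entropy_le_code_rate[OF IL irr cyc ne, of l] by simp
  finally show ?thesis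
    using l1 by (simp add: field_simps)
qed

end
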